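(* Let $C_{11}(\{1,3\})$ be the circulant graph with vertex set $\mathbb Z_{11}$ in which $i$ and $j$ are adjacent iff $i-j\equiv \pm1$ or $\pm 3 \pmod{11}$, and let $G_{22}$ be the complement of the line graph $L(C_{11}(\{1,3\}))$. Then $G_{22}$ is not co-triangle, i.e., $L(C_{11}(\{1,3\}))$ is not a triangle graph.
   Context: A graph $G$ is triangle if for every maximal stable set $S$ of $G$ and every edge $uv$ of $G$ with $u,v\notin S$, there is $s\in S$ adjacent to both $u$ and $v$. The line graph $L(H)$ has vertex set $E(H)$, with two edges adjacent iff they share an endpoint. *)

theory Defs
  imports Main
begin

text \<open>A simple graph is given by a vertex set V and a symmetric irreflexive
adjacency relation E (only its restriction to V matters).\<close>

definition stable_set :: "'a set \<Rightarrow> ('a \<Rightarrow> 'a \<Rightarrow> bool) \<Rightarrow> 'a set \<Rightarrow> bool" where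
  "stable_set V E S \<longleftrightarrow> S \<subseteq> V \<and> (\<forall>x\<in>S. \<forall>y\<in>S. \<not> E x y)"

definition maximal_stable_set :: "'a set \<Rightarrow> ('a \<Rightarrow> 'a \<Rightarrow> bool) \<Rightarrow> 'a set \<Rightarrow> bool" where
  "maximal_stable_set V E S \<longleftrightarrow> stable_set V E S \<and>
     (\<forall>T. stable_set V E T \<and> S \<subseteq> T \<longrightarrow> T = S)"

definition triangle_graph :: "'a set \<Rightarrow> ('a \<Rightarrow> 'a \<Rightarrow> bool) \<Rightarrow> bool" where
  "triangle_graph V E \<longleftrightarrow>
     (\<forall>S. maximal_stable_set V E S \<longrightarrow>
        (\<forall>u\<in>V. \<forall>v\<in>V. E u v \<and> u \<notin> S \<and> v \<notin> S \<longrightarrow>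
            (\<exists>s\<in>S. E s u \<and> E s v)))"

definition complement_adj :: "('a \<Rightarrow> 'a \<Rightarrow> bool) \<Rightarrow> 'a \<Rightarrow> 'a \<Rightarrow> bool" where
  "complement_adj E x y \<longleftrightarrow> x \<noteq> y \<and> \<not> E x y"

definition co_triangle_graph :: "'a set \<Rightarrow> ('a \<Rightarrow> 'a \<Rightarrow> bool) \<Rightarrow> bool" where
  "co_triangle_graph V E \<longleftrightarrow> triangle_graph V (complement_adj E)"

definition line_vertices :: "'a set \<Rightarrow> ('a \<Rightarrow> 'a \<Rightarrow> bool) \<Rightarrow> 'a set set" where
  "line_vertices V E = {{u, v} | u v. u \<in> V \<and> v \<in> V \<and> E u v}"

definition line_adj :: "'a set \<Rightarrow> 'a set \<Rightarrow> bool" where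
  "line_adj e f \<longleftrightarrow> e \<noteq> f \<and> e \<inter> f \<noteq> {}"

definition C11_V :: "int set" where
  "C11_V = {0..10}"

definition C11_adj :: "int \<Rightarrow> int \<Rightarrow> bool" where
  "C11_adj i j \<longleftrightarrow> (i - j) mod 11 \<in> {1, 3, 8, 10}"

definition G22_V :: "int set set" where
  "G22_V = line_vertices C11_V C11_adj"

definition G22_adj :: "int set \<Rightarrow> int set \<Rightarrow> bool" where
  "G22_adj = complement_adj line_adj"

end

theory Submission
  imports Defs
begin

text \<open>In the line graph, stable sets are matchings of the underlying graph, and a matching
  meeting every edge is a maximal stable set. The matching
  \<open>{1,2}, {3,4}, {5,6}, {7,8}, {9,10}\<close> of \<open>C\<^sub>1\<^sub>1({1,3})\<close> misses only the vertex 0. The two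
  edges \<open>{0,1}\<close> and \<open>{0,10}\<close> are then adjacent in the line graph and outside the matching,
  yet a matching edge adjacent to both would have to be \<open>{1,10}\<close>, which is not in it.
  Since the line adjacency is irreflexive, \<open>G\<^sub>2\<^sub>2\<close> being co-triangle is the same statement.\<close>

lemma complement_adj_complement_adj:
  assumes "\<And>x. \<not> E x x"
  shows "complement_adj (complement_adj E) = E"
  using assms by (auto simp: fun_eq_iff complement_adj_def)

lemma co_triangle_graph_complement_iff:
  assumes "\<And>x. \<not> E x x"
  shows "co_triangle_graph V (complement_adj E) \<longleftrightarrow> triangle_graph V E"
  using assms by (simp add: co_triangle_graph_def complement_adj_complement_adj)

lemma line_adj_irrefl: "\<not> line_adj e e"
  by (simp add: line_adj_def)

lemma line_verticesI: "u \<in> V \<Longrightarrow> v \<in> V \<Longrightarrow> E u v \<Longrightarrow> {u, v} \<in> line_vertices V E"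
  unfolding line_vertices_def by blast

lemma maximal_stable_set_line_graphI:
  assumes sub: "M \<subseteq> line_vertices V E"
    and matching: "pairwise disjnt M"
    and covering: "\<And>e. e \<in> line_vertices V E \<Longrightarrow> e \<inter> \<Union>M \<noteq> {}"
  shows "maximal_stable_set (line_vertices V E) line_adj M"
  unfolding maximal_stable_set_def
proof (intro conjI allI impI)
  show stable: "stable_set (line_vertices V E) line_adj M"
    using sub matching by (auto simp: stable_set_def line_adj_def pairwise_def disjnt_def)
  fix T
  assume T: "stable_set (line_vertices V E) line_adj T \<and> M \<subseteq> T"
  show "T = M"
  proof (rule ccontr)
    assume "T \<noteq> M"
    with T obtain t where t: "t \<in> T" "t \<notin> M" by blast
    with T have "t \<in> line_vertices V E" by (auto simp: stable_set_def)
    then obtain s where s: "s \<in> M" "s \<inter> t \<noteq> {}"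
      using covering by blast
    with t have "line_adj s t" by (auto simp: line_adj_def)
    with s t T show False by (auto simp: stable_set_def)
  qed
qed

lemma not_triangle_graph_line_graphI:
  assumes max: "maximal_stable_set (line_vertices V E) line_adj M"
    and ab: "{a, b} \<in> line_vertices V E" and ac: "{a, c} \<in> line_vertices V E"
    and "b \<noteq> c" and uncovered: "a \<notin> \<Union>M" and "{b, c} \<notin> M"
  shows "\<not> triangle_graph (line_vertices V E) line_adj"
proof
  assume "triangle_graph (line_vertices V E) line_adj"
  moreover have "line_adj {a, b} {a, c}"
    using \<open>b \<noteq> c\<close> by (auto simp: line_adj_def doubleton_eq_iff)
  moreover have "{a, b} \<notin> M" "{a, c} \<notin> M"
    using uncovered by auto
  ultimately obtain s where s: "s \<in> M" "line_adj s {a, b}" "line_adj s {a, c}"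
    using max ab ac unfolding triangle_graph_def by blast
  with uncovered have "b \<in> s" "c \<in> s"
    by (auto simp: line_adj_def)
  from s(1) max have "s \<in> line_vertices V E"
    by (auto simp: maximal_stable_set_def stable_set_def)
  then obtain u v where "s = {u, v}"
    unfolding line_vertices_def by blast
  with \<open>b \<in> s\<close> \<open>c \<in> s\<close> \<open>b \<noteq> c\<close> have "s = {b, c}"
    by auto
  with s(1) \<open>{b, c} \<notin> M\<close> show False
    by simp
qed

definition C11_matching :: "int set set" where
  "C11_matching = {{1, 2}, {3, 4}, {5, 6}, {7, 8}, {9, 10}}"

lemma Union_C11_matching: "\<Union>C11_matching = {1..10}"
proof -
  have "{1..10::int} = {1, 2, 3, 4, 5, 6, 7, 8, 9, 10}"
    by (auto simp: atLeastAtMost_iff) presburger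
  then show ?thesis
    by (auto simp: C11_matching_def)
qed

lemma C11_matching_maximal:
  "maximal_stable_set (line_vertices C11_V C11_adj) line_adj C11_matching"
proof (rule maximal_stable_set_line_graphI)
  show "C11_matching \<subseteq> line_vertices C11_V C11_adj"
    by (auto simp: C11_matching_def C11_V_def C11_adj_def intro!: line_verticesI)
  show "pairwise disjnt C11_matching"
    by (auto simp: C11_matching_def pairwise_def disjnt_def)
  fix e
  assume "e \<in> line_vertices C11_V C11_adj"
  then obtain u v where "e = {u, v}" "u \<in> C11_V" "v \<in> C11_V" "C11_adj u v"
    unfolding line_vertices_def by blast
  moreover from \<open>C11_adj u v\<close> have "u \<noteq> v"
    by (auto simp: C11_adj_def)
  ultimately show "e \<inter> \<Union>C11_matching \<noteq> {}"
    by (auto simp: Union_C11_matching C11_V_def)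
qed

theorem proposition37:
  shows "\<not> co_triangle_graph G22_V G22_adj \<and>
         \<not> triangle_graph (line_vertices C11_V C11_adj) line_adj"
proof -
  have not_triangle: "\<not> triangle_graph (line_vertices C11_V C11_adj) line_adj"
  proof (rule not_triangle_graph_line_graphI[OF C11_matching_maximal, of 0 1 10])
    show "{0, 1} \<in> line_vertices C11_V C11_adj" "{0, 10} \<in> line_vertices C11_V C11_adj"
      by (auto simp: C11_V_def C11_adj_def intro!: line_verticesI)
    show "0 \<notin> \<Union>C11_matching" "{1, 10} \<notin> C11_matching"
      by (auto simp: Union_C11_matching C11_matching_def doubleton_eq_iff)
  qed simp
  then show ?thesis
    unfolding G22_V_def G22_adj_def co_triangle_graph_complement_iff[OF line_adj_irrefl]
    by simp
qed

end
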